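(* Let $A\in\mathbb M_{N\times N}$ and $B=(b_1,\dots,b_M)\in\mathbb M_{N\times M}$ ($1\le M\le N$) satisfy $\mathrm{rank}[b_i,Ab_i,\dots,A^{N-1}b_i]=N$ for every $i=1,\dots,M$. Let $r>0$, $\bar x\in\mathbb R^N$ and $\bar\zeta\in\mathbb S^{N-1}$ be such that $$\bar x=\sum_{i=1}^M\int_0^r e^{-At}b_i\,\mathrm{sign}\big(\langle\bar\zeta,e^{-At}b_i\rangle\big)\,dt.$$ Then $$h(\bar x,\bar\zeta)=-\sum_{i=1}^M\big|\langle\bar\zeta,e^{-Ar}b_i\rangle\big|.$$
   Context: $h$ is the minimized Hamiltonian of the control system $\dot x=Ax+Bu$, $u\in[-1,1]^M$: $h(x,\zeta)=\langle\zeta,Ax\rangle+\min_{u\in[-1,1]^M}\langle\zeta,Bu\rangle$. $\mathbb S^{N-1}$ is the unit sphere. *)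

theory Defs
  imports "HOL-Analysis.Analysis"
begin

fun matpow :: "real^'n^'n \<Rightarrow> nat \<Rightarrow> real^'n^'n" where
  "matpow A 0 = mat 1"
| "matpow A (Suc k) = A ** matpow A k"

definition mexp :: "real^'n^'n \<Rightarrow> real^'n^'n" where
  "mexp A = (\<Sum>k. (1 / fact k) *\<^sub>R matpow A k)"

definition col_idx :: "'n::finite \<Rightarrow> nat" where
  "col_idx = (SOME f. bij_betw f (UNIV::'n set) {..<CARD('n)})"

definition kalman :: "real^'n^'n \<Rightarrow> real^'n \<Rightarrow> real^'n^'n" where
  "kalman A b = (\<chi> i j. (matpow A (col_idx j) *v b) $ i)"

definition ham :: "real^'n^'n \<Rightarrow> real^'m^'n \<Rightarrow> real^'n \<Rightarrow> real^'n \<Rightarrow> real" where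
  "ham A B x z = z \<bullet> (A *v x) + Inf {z \<bullet> (B *v u) | u. \<forall>i. \<bar>u $ i\<bar> \<le> 1}"

end

theory Submission
  imports Defs "HOL-Complex_Analysis.Complex_Analysis"
begin

text \<open>
  Write \<open>g\<^sub>i(t) = \<langle>\<zeta>, e\<^sup>-\<^sup>A\<^sup>t b\<^sub>i\<rangle>\<close>. Then \<open>g\<^sub>i' = -\<langle>\<zeta>, A e\<^sup>-\<^sup>A\<^sup>t b\<^sub>i\<rangle>\<close>, so
  \<open>\<langle>\<zeta>, A x\<rangle> = \<Sum>\<^sub>i \<integral>\<^sub>0\<^sup>r sgn (g\<^sub>i) \<langle>\<zeta>, A e\<^sup>-\<^sup>A\<^sup>t b\<^sub>i\<rangle> dt = \<Sum>\<^sub>i (|g\<^sub>i(0)| - |g\<^sub>i(r)|)\<close>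
  by the fundamental theorem of calculus for \<open>|g\<^sub>i|\<close>, while the minimum of \<open>\<langle>\<zeta>, B u\<rangle>\<close> over the
  box is \<open>-\<Sum>\<^sub>i |g\<^sub>i(0)|\<close>. The fundamental theorem applies because \<open>g\<^sub>i\<close> is an entire power
  series in \<open>t\<close>: it either vanishes identically or has finitely many zeros on \<open>[0, r]\<close>,
  outside of which \<open>|g\<^sub>i|\<close> is differentiable. This makes the rank condition superfluous.
\<close>

definition exp_series :: "(nat \<Rightarrow> real) \<Rightarrow> real \<Rightarrow> real" where
  "exp_series p t = (\<Sum>k. p k / fact k * t ^ k)"

lemma summable_exp_series:
  fixes y :: "'a::{real_normed_field,banach}"
  assumes "\<And>k. \<bar>p k\<bar> \<le> C * D ^ k"
  shows "summable (\<lambda>k. of_real (p k / fact k) * y ^ k)"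
proof (rule summable_comparison_test)
  have "norm (of_real (p k / fact k) * y ^ k) \<le> C * (inverse (fact k) * (D * norm y) ^ k)" for k
  proof -
    have "norm (of_real (p k / fact k) * y ^ k) = \<bar>p k\<bar> * norm y ^ k / fact k"
      by (simp add: norm_mult norm_power norm_divide)
    also have "\<dots> \<le> C * D ^ k * norm y ^ k / fact k"
      by (intro divide_right_mono mult_right_mono assms) auto
    finally show ?thesis
      by (simp add: power_mult_distrib divide_inverse ac_simps)
  qed
  then show "\<exists>N. \<forall>k\<ge>N. norm (of_real (p k / fact k) * y ^ k)
                          \<le> C * (inverse (fact k) * (D * norm y) ^ k)"
    by blast
  show "summable (\<lambda>k. C * (inverse (fact k) * (D * norm y) ^ k))"
    by (intro summable_mult summable_exp)
qed

lemma exp_series_has_real_derivative: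
  assumes "\<And>k. \<bar>p k\<bar> \<le> C * D ^ k"
  shows "(exp_series p has_real_derivative exp_series (\<lambda>k. p (Suc k)) t) (at t)"
proof -
  have "diffs (\<lambda>k. p k / fact k) = (\<lambda>k. p (Suc k) / fact k)"
    by (simp add: diffs_def fun_eq_iff)
  moreover have "summable (\<lambda>k. p k / fact k * y ^ k)" for y :: real
    using summable_exp_series[OF assms, of y] by simp
  ultimately show ?thesis
    using termdiffs_strong_converges_everywhere[of "\<lambda>k. p k / fact k" t]
    by (simp add: exp_series_def[abs_def])
qed

lemma finite_zeros_exp_series:
  assumes "\<And>k. \<bar>p k\<bar> \<le> C * D ^ k" and "compact S" and "exp_series p t\<^sub>0 \<noteq> 0"
  shows "finite {t\<in>S. exp_series p t = 0}"
proof (rule ccontr)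
  define Z where "Z = {t\<in>S. exp_series p t = 0}"
  assume "infinite {t\<in>S. exp_series p t = 0}"
  then obtain \<xi> where "\<xi> islimpt Z"
    using Heine_Borel_imp_Bolzano_Weierstrass[OF \<open>compact S\<close>] unfolding Z_def by blast
  then obtain f where f: "\<And>n. f n \<in> Z - {\<xi>}" and "f \<longlonglongrightarrow> \<xi>"
    using islimpt_sequential by blast
  \<comment> \<open>Identity theorem for the entire extension of the series to \<open>\<complex>\<close>.\<close>
  define G where "G = (\<lambda>z::complex. \<Sum>k. of_real (p k / fact k) * z ^ k)"
  have "G holomorphic_on UNIV"
    unfolding G_def holomorphic_on_def field_differentiable_def
    using termdiffs_strong_converges_everywhere[OF summable_exp_series[OF assms(1)]]
      has_field_derivative_at_within by blast
  have G_of_real: "G (of_real t) = of_real (exp_series p t)" for t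
  proof -
    have "summable (\<lambda>k. p k / fact k * t ^ k)"
      using summable_exp_series[OF assms(1), of t] by simp
    then have "(\<Sum>k. of_real (p k / fact k * t ^ k)) = complex_of_real (exp_series p t)"
      unfolding exp_series_def by (rule suminf_of_real[symmetric])
    then show ?thesis
      by (simp only: G_def of_real_mult of_real_power)
  qed
  have "complex_of_real \<xi> islimpt of_real ` Z"
    unfolding islimpt_sequential
  proof (intro exI conjI allI)
    show "complex_of_real (f n) \<in> of_real ` Z - {complex_of_real \<xi>}" for n
      using f[of n] by auto
    show "(\<lambda>n. complex_of_real (f n)) \<longlonglongrightarrow> complex_of_real \<xi>"
      using \<open>f \<longlonglongrightarrow> \<xi>\<close> by (rule tendsto_of_real)
  qed
  then have "G (of_real t\<^sub>0) = 0"
    by (rule analytic_continuation[OF \<open>G holomorphic_on UNIV\<close> open_UNIV connected_UNIV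
          subset_UNIV UNIV_I]) (auto simp: G_of_real Z_def)
  with assms(3) show False
    by (simp add: G_of_real)
qed

lemma has_real_derivative_abs:
  fixes g :: "real \<Rightarrow> real"
  assumes g: "(g has_real_derivative g') (at t)" and "g t \<noteq> 0"
  shows "((\<lambda>s. \<bar>g s\<bar>) has_real_derivative sgn (g t) * g') (at t)"
proof -
  have "(g \<longlongrightarrow> g t) (nhds t)"
    using DERIV_isCont[OF g] by (simp add: isCont_def tendsto_at_iff_tendsto_nhds)
  then have "eventually (\<lambda>s. dist (g s) (g t) < \<bar>g t\<bar>) (nhds t)"
    using \<open>g t \<noteq> 0\<close> by (intro tendstoD) auto
  then have "eventually (\<lambda>s. \<bar>g s\<bar> = sgn (g t) * g s) (nhds t)"
    by eventually_elim (auto simp: dist_real_def sgn_real_def split: if_splits)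
  moreover have "((\<lambda>s. sgn (g t) * g s) has_real_derivative sgn (g t) * g') (at t)"
    using g by (rule DERIV_cmult)
  ultimately show ?thesis
    using DERIV_cong_ev[OF refl _ refl] by (metis (mono_tags, lifting) eventually_mono)
qed

lemma has_integral_sgn_mult_deriv:
  fixes g :: "real \<Rightarrow> real"
  assumes "a \<le> b" and g: "\<And>t. (g has_real_derivative g' t) (at t)"
    and "finite {t\<in>{a..b}. g t = 0}"
  shows "((\<lambda>t. sgn (g t) * g' t) has_integral \<bar>g b\<bar> - \<bar>g a\<bar>) {a..b}"
proof (rule fundamental_theorem_of_calculus_interior_strong[OF assms(3,1)])
  show "((\<lambda>s. \<bar>g s\<bar>) has_vector_derivative sgn (g t) * g' t) (at t)"
    if "t \<in> {a<..<b} - {t\<in>{a..b}. g t = 0}" for t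
    using that has_real_derivative_abs[OF g] has_real_derivative_iff_has_vector_derivative
    by auto
  have "continuous_on {a..b} g"
    using g DERIV_isCont continuous_at_imp_continuous_on by blast
  then show "continuous_on {a..b} (\<lambda>s. \<bar>g s\<bar>)"
    by (intro continuous_intros)
qed

lemma integrable_sgn_scaleR:
  fixes f :: "real \<Rightarrow> real" and v :: "real \<Rightarrow> 'a::euclidean_space"
  assumes f: "continuous_on {a..b} f" and v: "continuous_on {a..b} v"
  shows "(\<lambda>t. sgn (f t) *\<^sub>R v t) integrable_on {a..b}"
proof -
  obtain K where K: "\<And>t. t \<in> {a..b} \<Longrightarrow> norm (v t) \<le> K"
    using compact_imp_bounded[OF compact_continuous_image[OF v compact_Icc]]
    unfolding bounded_iff by blast
  have bound: "norm (sgn (f t) *\<^sub>R v t) \<le> K" if "t \<in> {a..b}" for t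
    using K[OF that] order_trans[OF norm_ge_zero K[OF that]] by (auto simp: sgn_real_def)
  have "(\<lambda>t. sgn (f t) *\<^sub>R v t) \<in> borel_measurable (lebesgue_on {a..b})"
    by (intro borel_measurable_scaleR measurable_compose[OF _ borel_measurable_sgn]
        continuous_imp_measurable_on_sets_lebesgue f v) auto
  then show ?thesis
    by (rule measurable_bounded_by_integrable_imp_integrable[OF _ integrable_const_ivl bound]) auto
qed

lemma matpow_scaleR: "matpow (c *\<^sub>R A) k = c ^ k *\<^sub>R matpow A k"
  by (induction k) (simp_all add: matrix_scalar_ac scalar_matrix_assoc[symmetric])

lemma matpow_Suc_mult_vec: "matpow A (Suc k) *v b = A *v (matpow A k *v b)"
  by (simp add: matrix_vector_mul_assoc)

lemma matrix_vector_mult_bound: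
  fixes A :: "real^'m^'n"
  obtains D where "0 \<le> D" "\<And>y. norm (A *v y) \<le> D * norm y"
  using bounded_linear.nonneg_bounded[OF matrix_vector_mul_bounded_linear[of A]]
  by (metis mult.commute)

lemma norm_matpow_mult_le:
  fixes A :: "real^'n^'n"
  assumes "\<And>y. norm (A *v y) \<le> D * norm y" and "0 \<le> D"
  shows "norm (matpow A k *v y) \<le> D ^ k * norm y"
proof (induction k)
  case (Suc k)
  have "norm (matpow A (Suc k) *v y) \<le> D * norm (matpow A k *v y)"
    unfolding matpow_Suc_mult_vec by (rule assms(1))
  also have "\<dots> \<le> D * (D ^ k * norm y)"
    using Suc \<open>0 \<le> D\<close> by (rule mult_left_mono)
  finally show ?case
    by simp
qed simp

lemma norm_le_sum_abs_entries: "norm (X :: real^'m^'n) \<le> (\<Sum>i\<in>UNIV. \<Sum>j\<in>UNIV. \<bar>X $ i $ j\<bar>)"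
proof -
  have "norm X \<le> (\<Sum>i\<in>UNIV. norm (X $ i))"
    unfolding norm_vec_def by (rule L2_set_le_sum) simp
  also have "\<dots> \<le> (\<Sum>i\<in>UNIV. \<Sum>j\<in>UNIV. \<bar>X $ i $ j\<bar>)"
    by (intro sum_mono norm_le_l1_cart)
  finally show ?thesis .
qed

lemma summable_mexp: "summable (\<lambda>k. (1 / fact k) *\<^sub>R matpow (A :: real^'n^'n) k)"
proof -
  obtain D where D: "0 \<le> D" "\<And>y. norm (A *v y) \<le> D * norm y"
    using matrix_vector_mult_bound by blast
  have "\<bar>matpow A k $ i $ j\<bar> \<le> D ^ k" for k i j
  proof -
    have "matpow A k $ i $ j = (matpow A k *v axis j 1) $ i"
      by (simp add: matrix_vector_mult_basis column_def)
    then have "\<bar>matpow A k $ i $ j\<bar> \<le> norm (matpow A k *v axis j 1)"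
      by (metis component_le_norm_cart)
    also have "\<dots> \<le> D ^ k"
      using norm_matpow_mult_le[OF D(2,1), of k "axis j 1"] by simp
    finally show ?thesis .
  qed
  then have "norm (matpow A k) \<le> (\<Sum>i\<in>(UNIV::'n set). \<Sum>j\<in>(UNIV::'n set). D ^ k)" for k
    by (intro order_trans[OF norm_le_sum_abs_entries] sum_mono)
  then have "norm (matpow A k) \<le> real (CARD('n) * CARD('n)) * D ^ k" for k
    by (simp add: mult.assoc)
  then have "norm ((1 / fact k) *\<^sub>R matpow A k)
               \<le> real (CARD('n) * CARD('n)) * (inverse (fact k) * D ^ k)" for k
    by (simp add: field_simps)
  then show ?thesis
    by (intro summable_comparison_test[OF _ summable_mult[OF summable_exp]]) blast
qed

lemma bounded_linear_mexp:
  fixes L :: "real^'n^'n \<Rightarrow> real"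
  assumes "bounded_linear L"
  shows "L (mexp M) = (\<Sum>k. L (matpow M k) / fact k)"
  unfolding mexp_def bounded_linear.suminf[OF assms summable_mexp]
  using linear.scaleR[OF bounded_linear.linear[OF assms]] by (simp add: field_simps)

lemma mexp_neg_eq_exp_series:
  fixes A :: "real^'n^'n" and L :: "real^'n \<Rightarrow> real"
  assumes L: "bounded_linear L"
  shows "L (mexp (- (t *\<^sub>R A)) *v b) = exp_series (\<lambda>k. L (matpow A k *v b)) (- t)"
proof -
  have "linear (\<lambda>X::real^'n^'n. X *v b)"
    by (rule linearI) (simp_all add: matrix_vector_mult_add_rdistrib scaleR_matrix_vector_assoc)
  then have "bounded_linear (\<lambda>X::real^'n^'n. L (X *v b))"
    by (intro bounded_linear_compose[OF L]) (simp add: linear_conv_bounded_linear)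
  from bounded_linear_mexp[OF this, of "(- t) *\<^sub>R A"]
  have "L (mexp (- (t *\<^sub>R A)) *v b) = (\<Sum>k. L (matpow ((- t) *\<^sub>R A) k *v b) / fact k)"
    by simp
  also have "\<dots> = exp_series (\<lambda>k. L (matpow A k *v b)) (- t)"
    unfolding exp_series_def matpow_scaleR
    by (simp add: scaleR_matrix_vector_assoc[symmetric] linear.scaleR[OF bounded_linear.linear[OF L]]
        mult.commute)
  finally show ?thesis .
qed

lemma matpow_apply_bound:
  fixes A :: "real^'n^'n" and L :: "real^'n \<Rightarrow> real"
  assumes "bounded_linear L"
  obtains C D where "\<And>k. \<bar>L (matpow A k *v b)\<bar> \<le> C * D ^ k"
proof -
  obtain K where K: "0 \<le> K" "\<And>y. norm (L y) \<le> norm y * K"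
    using bounded_linear.nonneg_bounded[OF assms] by blast
  obtain D where D: "0 \<le> D" "\<And>y. norm (A *v y) \<le> D * norm y"
    using matrix_vector_mult_bound by blast
  have "\<bar>L (matpow A k *v b)\<bar> \<le> (K * norm b) * D ^ k" for k
  proof -
    have "\<bar>L (matpow A k *v b)\<bar> \<le> norm (matpow A k *v b) * K"
      using K(2) by simp
    also have "\<dots> \<le> D ^ k * norm b * K"
      using norm_matpow_mult_le[OF D(2,1)] K(1) by (rule mult_right_mono)
    finally show ?thesis
      by (simp add: ac_simps)
  qed
  then show ?thesis
    by (rule that)
qed

lemma has_real_derivative_mexp_neg:
  fixes A :: "real^'n^'n" and L :: "real^'n \<Rightarrow> real"
  assumes L: "bounded_linear L"
  shows "((\<lambda>t. L (mexp (- (t *\<^sub>R A)) *v b))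
          has_real_derivative - L (A *v (mexp (- (t *\<^sub>R A)) *v b))) (at t)"
proof -
  obtain C D where bound: "\<And>k. \<bar>L (matpow A k *v b)\<bar> \<le> C * D ^ k"
    using matpow_apply_bound[OF L] by blast
  have "bounded_linear (\<lambda>y. L (A *v y))"
    using L matrix_vector_mul_bounded_linear by (rule bounded_linear_compose)
  from mexp_neg_eq_exp_series[OF this]
  have "L (A *v (mexp (- (t *\<^sub>R A)) *v b)) = exp_series (\<lambda>k. L (matpow A (Suc k) *v b)) (- t)"
    by (simp add: matrix_vector_mul_assoc)
  moreover have "((\<lambda>t. exp_series (\<lambda>k. L (matpow A k *v b)) (- t)) has_real_derivative
      - exp_series (\<lambda>k. L (matpow A (Suc k) *v b)) (- t)) (at t)"
    using DERIV_chain2[OF exp_series_has_real_derivative[OF bound] DERIV_minus[OF DERIV_ident]]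
    by simp
  ultimately show ?thesis
    by (simp add: mexp_neg_eq_exp_series[OF L])
qed

lemma continuous_on_mexp_neg:
  fixes A :: "real^'n^'n" and L :: "real^'n \<Rightarrow> real"
  assumes "bounded_linear L"
  shows "continuous_on S (\<lambda>t. L (mexp (- (t *\<^sub>R A)) *v b))"
  using has_real_derivative_mexp_neg[OF assms] DERIV_isCont continuous_at_imp_continuous_on
  by blast

lemma finite_zeros_mexp_neg:
  fixes A :: "real^'n^'n" and L :: "real^'n \<Rightarrow> real"
  assumes L: "bounded_linear L" and "L (mexp (- (t\<^sub>0 *\<^sub>R A)) *v b) \<noteq> 0"
  shows "finite {t\<in>{a..b'}. L (mexp (- (t *\<^sub>R A)) *v b) = 0}"
proof -
  define p where "p = (\<lambda>k. L (matpow A k *v b))"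
  obtain C D where bound: "\<And>k. \<bar>p k\<bar> \<le> C * D ^ k"
    unfolding p_def using matpow_apply_bound[OF L] by blast
  have "exp_series p (- t\<^sub>0) \<noteq> 0"
    using assms(2) by (simp add: mexp_neg_eq_exp_series[OF L] p_def)
  then have "finite {s\<in>uminus ` {a..b'}. exp_series p s = 0}"
    by (rule finite_zeros_exp_series[OF bound compact_negations[OF compact_Icc]])
  then have "finite (uminus -` {s\<in>uminus ` {a..b'}. exp_series p s = 0})"
    by (rule finite_vimageI) (simp add: inj_on_def)
  moreover have "{t\<in>{a..b'}. L (mexp (- (t *\<^sub>R A)) *v b) = 0}
                   \<subseteq> uminus -` {s\<in>uminus ` {a..b'}. exp_series p s = 0}"
    by (auto simp: mexp_neg_eq_exp_series[OF L] p_def)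
  ultimately show ?thesis
    by (rule finite_subset[rotated])
qed

lemma inner_mult_integral_sgn_mexp_neg:
  fixes A :: "real^'n^'n" and b z :: "real^'n"
  assumes "0 \<le> r"
  shows "z \<bullet> (A *v integral {0..r} (\<lambda>t. sgn (z \<bullet> (mexp (- (t *\<^sub>R A)) *v b))
                                       *\<^sub>R (mexp (- (t *\<^sub>R A)) *v b)))
         = \<bar>z \<bullet> b\<bar> - \<bar>z \<bullet> (mexp (- (r *\<^sub>R A)) *v b)\<bar>"
proof -
  define v where "v t = mexp (- (t *\<^sub>R A)) *v b" for t
  define g where "g t = z \<bullet> v t" for t
  have h: "bounded_linear (\<lambda>y. z \<bullet> (A *v y))"
    by (rule bounded_linear_compose[OF bounded_linear_inner_right matrix_vector_mul_bounded_linear])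
  have deriv: "(g has_real_derivative - (z \<bullet> (A *v v t))) (at t)" for t
    unfolding g_def v_def by (rule has_real_derivative_mexp_neg[OF bounded_linear_inner_right])
  have ftc: "((\<lambda>t. sgn (g t) * (z \<bullet> (A *v v t))) has_integral \<bar>g 0\<bar> - \<bar>g r\<bar>) {0..r}"
  proof (cases "\<exists>t\<^sub>0. g t\<^sub>0 \<noteq> 0")
    case True
    then obtain t\<^sub>0 where "g t\<^sub>0 \<noteq> 0"
      by blast
    then have "finite {t\<in>{0..r}. g t = 0}"
      unfolding g_def v_def by (rule finite_zeros_mexp_neg[OF bounded_linear_inner_right])
    from has_integral_neg[OF has_integral_sgn_mult_deriv[OF assms deriv this]]
    show ?thesis
      by simp
  qed simp
  have "continuous_on {0..r} (\<lambda>t. \<chi> j. v t $ j)"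
    unfolding v_def by (intro continuous_on_vec_lambda continuous_on_mexp_neg bounded_linear_vec_nth)
  moreover have "continuous_on {0..r} g"
    unfolding g_def v_def by (rule continuous_on_mexp_neg[OF bounded_linear_inner_right])
  ultimately have "(\<lambda>t. sgn (g t) *\<^sub>R v t) integrable_on {0..r}"
    by (intro integrable_sgn_scaleR) simp_all
  from integral_linear[OF this h]
  have "z \<bullet> (A *v integral {0..r} (\<lambda>t. sgn (g t) *\<^sub>R v t))
          = integral {0..r} (\<lambda>t. sgn (g t) * (z \<bullet> (A *v v t)))"
    by (simp add: o_def matrix_vector_mult_scaleR)
  also have "\<dots> = \<bar>g 0\<bar> - \<bar>g r\<bar>"
    using ftc by (rule integral_unique)
  also have "g 0 = z \<bullet> b"
    using powser_zero[of "\<lambda>k. z \<bullet> (matpow A k *v b) / fact k"]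
    unfolding g_def v_def mexp_neg_eq_exp_series[OF bounded_linear_inner_right] exp_series_def
    by simp
  finally show ?thesis
    unfolding g_def v_def .
qed

lemma Inf_inner_mult_box:
  fixes B :: "real^'m^'n"
  shows "Inf {z \<bullet> (B *v u) | u. \<forall>i. \<bar>u $ i\<bar> \<le> 1} = - (\<Sum>i\<in>UNIV. \<bar>z \<bullet> column i B\<bar>)"
proof (rule cInf_eq_minimum)
  have inner_mult: "z \<bullet> (B *v u) = (\<Sum>i\<in>UNIV. u $ i * (z \<bullet> column i B))" for u
    by (simp add: matrix_mult_sum inner_sum_right scalar_mult_eq_scaleR)
  define u\<^sub>0 :: "real^'m" where "u\<^sub>0 = (\<chi> i. - sgn (z \<bullet> column i B))"
  have "z \<bullet> (B *v u\<^sub>0) = - (\<Sum>i\<in>UNIV. \<bar>z \<bullet> column i B\<bar>)"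
    unfolding inner_mult u\<^sub>0_def by (simp add: abs_sgn sum_negf mult.commute)
  moreover have "\<forall>i. \<bar>u\<^sub>0 $ i\<bar> \<le> 1"
    by (simp add: u\<^sub>0_def sgn_real_def)
  ultimately show "- (\<Sum>i\<in>UNIV. \<bar>z \<bullet> column i B\<bar>) \<in> {z \<bullet> (B *v u) | u. \<forall>i. \<bar>u $ i\<bar> \<le> 1}"
    by force
  fix x
  assume "x \<in> {z \<bullet> (B *v u) | u. \<forall>i. \<bar>u $ i\<bar> \<le> 1}"
  then obtain u :: "real^'m" where x: "x = z \<bullet> (B *v u)" and u: "\<forall>i. \<bar>u $ i\<bar> \<le> 1"
    by blast
  have "\<bar>u $ i * (z \<bullet> column i B)\<bar> \<le> \<bar>z \<bullet> column i B\<bar>" for i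
    using mult_right_mono[OF u[rule_format, of i] abs_ge_zero[of "z \<bullet> column i B"]]
    by (simp add: abs_mult)
  then have "- \<bar>z \<bullet> column i B\<bar> \<le> u $ i * (z \<bullet> column i B)" for i
    by (metis abs_le_iff minus_le_iff)
  then show "- (\<Sum>i\<in>UNIV. \<bar>z \<bullet> column i B\<bar>) \<le> x"
    unfolding x inner_mult by (simp add: sum_negf[symmetric] sum_mono)
qed

theorem lemma4p2:
  fixes A :: "real^'n^'n" and B :: "real^'m^'n"
    and r :: real and xbar zbar :: "real^'n"
  assumes "CARD('m) \<le> CARD('n)"
    and "\<forall>i. rank (kalman A (column i B)) = CARD('n)"
    and "r > 0"
    and "norm zbar = 1"
    and "xbar = (\<Sum>i\<in>UNIV. integral {0..r}
            (\<lambda>t. sgn (zbar \<bullet> (mexp (- (t *\<^sub>R A)) *v column i B))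
                   *\<^sub>R (mexp (- (t *\<^sub>R A)) *v column i B)))"
  shows "ham A B xbar zbar = - (\<Sum>i\<in>UNIV. \<bar>zbar \<bullet> (mexp (- (r *\<^sub>R A)) *v column i B)\<bar>)"
proof -
  have "zbar \<bullet> (A *v xbar)
          = (\<Sum>i\<in>UNIV. \<bar>zbar \<bullet> column i B\<bar> - \<bar>zbar \<bullet> (mexp (- (r *\<^sub>R A)) *v column i B)\<bar>)"
    using \<open>r > 0\<close> unfolding assms(5) linear_sum[OF matrix_vector_mul_linear]
    by (simp add: inner_sum_right inner_mult_integral_sgn_mexp_neg)
  then show ?thesis
    unfolding ham_def Inf_inner_mult_box by (simp add: sum_subtractf)
qed

end
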